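(* Let $c\geq 0$ and let $n>c$ be a real number. For $k\in\mathbb{N}_0$ and $x\geq 0$ let $$p_{n,k}^{[c]}(x)=(-1)^k\binom{-n/c}{k}(cx)^k(1+cx)^{-\frac{n}{c}-k}\ \text{ if } c>0,\qquad p_{n,k}^{[0]}(x)=\frac{(nx)^k}{k!}e^{-nx}.$$ Then the Shannon entropy $$H_{n,c}(x)=-\sum_{k=0}^\infty p_{n,k}^{[c]}(x)\log p_{n,k}^{[c]}(x)$$ is concave and increasing on $[0,+\infty)$.
   Context: For $\alpha\in\mathbb{R}$ and $k\in\mathbb{N}$, $\binom{\alpha}{k}=\frac{\alpha(\alpha-1)\cdots(\alpha-k+1)}{k!}$ and $\binom{\alpha}{0}=1$. For each $x\geq0$, $(p_{n,k}^{[c]}(x))_{k\geq 0}$ is a probability distribution (negative binomial type for $c>0$, Poisson for $c=0$), with the convention $0\log 0=0$. *)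

theory Defs
  imports "HOL-Analysis.Analysis"
begin

definition p_basis :: "real \<Rightarrow> real \<Rightarrow> nat \<Rightarrow> real \<Rightarrow> real" where
  "p_basis c n k x =
     (if c > 0 then (-1) ^ k * ((- n / c) gchoose k) * (c * x) ^ k * (1 + c * x) powr (- n / c - real k)
      else (n * x) ^ k / fact k * exp (- n * x))"

text \<open>Shannon entropy with convention 0 log 0 = 0 (note ln 0 = 0 in Isabelle, so p * ln p = 0 for p = 0).\<close>
definition shannon_entropy :: "real \<Rightarrow> real \<Rightarrow> real \<Rightarrow> real" where
  "shannon_entropy c n x = - (\<Sum>k. p_basis c n k x * ln (p_basis c n k x))"

end

theory Submission
  imports Defs "HOL-Real_Asymp.Real_Asymp"
begin

(*
  After rescaling (l = n x in the Poisson case; t = c x and a = n / c otherwise) the entropy has a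
  closed form through a power series: l - l ln l + e^(-l) \<Sum> ln(k!) l^k / k!, respectively
  a (1 + t) ln (1 + t) - a t ln t - (1 + t)^(-a) \<Sum> C_k ln C_k u^k with u = t / (1 + t) and
  C_k = (a)_k / k!.  Its second derivative is controlled coefficientwise: the second differences of
  ln k! are at most 1 / (k + 1), those of ln C_k at least 1 / (a + k + 1) - 1 / (k + 1), and summing
  against the generating functions e^l and (1 - u)^(-a) shows that the second derivative is \<le> 0.
  A nonnegative function that is concave on (0, \<infinity>) and vanishes at 0 is concave on [0, \<infinity>) and,
  being bounded below, nondecreasing.
*)

lemma concave_nonneg_above_chord_origin:
  fixes f :: "real \<Rightarrow> real"
  assumes conc: "concave_on {0<..} f" and nonneg: "\<And>x. x > 0 \<Longrightarrow> f x \<ge> 0"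
    and z: "0 < z" "z < y"
  shows "z / y * f y \<le> f z"
proof -
  have ev: "\<forall>\<^sub>F e in at_right 0. (z - e) / (y - e) * f y \<le> f z"
    using eventually_at_right_real[OF z(1)]
  proof (rule eventually_mono)
    fix e :: real assume e: "e \<in> {0<..<z}"
    define s where "s = (z - e) / (y - e)"
    have s: "0 \<le> s" "s \<le> 1" using e z by (auto simp: s_def field_simps)
    have "s * (y - e) = z - e" using e z by (simp add: s_def)
    then have "(1 - s) *\<^sub>R e + s *\<^sub>R y = z" by (simp add: algebra_simps)
    have "(1 - s) * f e + s * f y \<le> f z"
      using concave_onD[OF conc s, of e y] \<open>(1 - s) *\<^sub>R e + s *\<^sub>R y = z\<close> e z by auto
    moreover have "0 \<le> (1 - s) * f e" using s nonneg[of e] e by auto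
    ultimately show "(z - e) / (y - e) * f y \<le> f z" by (simp add: s_def)
  qed
  have lim: "((\<lambda>e. (z - e) / (y - e) * f y) \<longlongrightarrow> (z - 0) / (y - 0) * f y) (at_right 0)"
    using z by (intro tendsto_intros) auto
  show ?thesis
    using tendsto_upperbound[OF lim ev] by simp
qed

lemma concave_on_extend_origin:
  fixes f :: "real \<Rightarrow> real"
  assumes conc: "concave_on {0<..} f" and nonneg: "\<And>x. x \<ge> 0 \<Longrightarrow> f x \<ge> 0" and "f 0 = 0"
  shows "concave_on {0..} f"
proof (rule concave_on_linorderI)
  fix t x y :: real assume t: "0 < t" "t < 1" and x: "x \<in> {0..}" and y: "y \<in> {0..}" and "x < y"
  then have "y > 0" by auto
  show "(1 - t) * f x + t * f y \<le> f ((1 - t) *\<^sub>R x + t *\<^sub>R y)"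
  proof (cases "x = 0")
    case True
    have "t * y / y * f y \<le> f (t * y)"
      using concave_nonneg_above_chord_origin[OF conc, of "t * y" y] nonneg \<open>y > 0\<close> t
      by (simp add: mult_less_cancel_right2)
    then show ?thesis using True \<open>f 0 = 0\<close> \<open>y > 0\<close> by simp
  next
    case False
    then show ?thesis using concave_onD[OF conc, of t x y] t x \<open>y > 0\<close> by auto
  qed
qed simp

lemma concave_nonneg_imp_mono_on:
  fixes f :: "real \<Rightarrow> real"
  assumes conc: "concave_on {0..} f" and nonneg: "\<And>x. x \<ge> 0 \<Longrightarrow> f x \<ge> 0"
  shows "mono_on {0..} f"
proof (rule mono_onI)
  fix x y :: real assume x: "x \<in> {0..}" and "x \<le> y"
  show "f x \<le> f y"
  proof (cases "x = y")
    case False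
    with \<open>x \<le> y\<close> have xy: "x < y" by simp
    have ev: "\<forall>\<^sub>F z in at_top. (z - y) / (z - x) * f x \<le> f y"
      using eventually_gt_at_top[of y]
    proof (rule eventually_mono)
      fix z assume z: "y < z"
      define s where "s = (y - x) / (z - x)"
      have s: "0 \<le> s" "s \<le> 1" "1 - s = (z - y) / (z - x)"
        using xy z by (auto simp: s_def field_simps)
      have "s * (z - x) = y - x" using xy z by (simp add: s_def)
      then have "(1 - s) *\<^sub>R x + s *\<^sub>R z = y" by (simp add: algebra_simps)
      have "(1 - s) * f x + s * f z \<le> f y"
        using concave_onD[OF conc s(1,2), of x z] \<open>(1 - s) *\<^sub>R x + s *\<^sub>R z = y\<close> x xy z by auto
      moreover have "0 \<le> s * f z" using s nonneg[of z] x xy z by auto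
      ultimately show "(z - y) / (z - x) * f x \<le> f y" using s(3) by simp
    qed
    have lim: "((\<lambda>z. (z - y) / (z - x) * f x) \<longlongrightarrow> 1 * f x) at_top"
      by (intro tendsto_intros) real_asymp
    show ?thesis
      using tendsto_upperbound[OF lim ev] by simp
  qed simp
qed

lemma concave_on_pos_rescale:
  fixes f g :: "real \<Rightarrow> real"
  assumes conc: "concave_on {0<..} g" and "b > 0" and f: "\<And>x. x > 0 \<Longrightarrow> f x = g (b * x)"
  shows "concave_on {0<..} f"
proof (rule concave_on_linorderI)
  fix t x y :: real assume t: "0 < t" "t < 1" and x: "x \<in> {0<..}" and y: "y \<in> {0<..}"
  have "(1 - t) * g (b * x) + t * g (b * y) \<le> g ((1 - t) *\<^sub>R (b * x) + t *\<^sub>R (b * y))"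
    using concave_onD[OF conc, of t "b * x" "b * y"] t x y \<open>b > 0\<close> by auto
  moreover have "(1 - t) *\<^sub>R (b * x) + t *\<^sub>R (b * y) = b * ((1 - t) *\<^sub>R x + t *\<^sub>R y)"
    by (simp add: algebra_simps)
  moreover have "(1 - t) *\<^sub>R x + t *\<^sub>R y > 0" using t x y by (simp add: add_pos_pos)
  ultimately show "(1 - t) * f x + t * f y \<le> f ((1 - t) *\<^sub>R x + t *\<^sub>R y)"
    using f x y by simp
qed simp

lemma concave_mono_on_if_rescaled:
  fixes f g :: "real \<Rightarrow> real"
  assumes "concave_on {0<..} g" "b > 0" "g 0 = 0" "\<And>x. x \<ge> 0 \<Longrightarrow> g x \<ge> 0"
    and f: "\<And>x. x \<ge> 0 \<Longrightarrow> f x = g (b * x)"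
  shows "concave_on {0..} f \<and> mono_on {0..} f"
proof -
  have nonneg: "f x \<ge> 0" if "x \<ge> 0" for x
    using assms that by (simp add: f)
  have "concave_on {0<..} f"
    using concave_on_pos_rescale assms by simp
  then have "concave_on {0..} f"
    using concave_on_extend_origin nonneg assms by simp
  then show ?thesis
    using concave_nonneg_imp_mono_on nonneg by blast
qed

lemma Suc_times_div_fact: "real (Suc k) * (x / fact (Suc k)) = x / fact k"
  by (simp add: field_simps del: of_nat_Suc)

lemma exp_series_sums: "(\<lambda>k. x ^ k / fact k) sums exp (x :: real)"
  using exp_converges[of x] by (simp add: divide_inverse mult.commute)

lemma ln_diff_bounds:
  fixes x y :: real
  assumes "0 < x" "x < y"
  shows "(y - x) / y \<le> ln y - ln x" and "ln y - ln x \<le> (y - x) / x"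
proof -
  have "ln (x / y) \<le> x / y - 1" and "ln (y / x) \<le> y / x - 1"
    using assms by (intro ln_le_minus_one; simp)+
  then show "(y - x) / y \<le> ln y - ln x" and "ln y - ln x \<le> (y - x) / x"
    using assms by (simp_all add: ln_div field_simps)
qed

lemma sums_nonneg_term_le:
  fixes f :: "nat \<Rightarrow> real"
  assumes "f sums s" and "\<And>k. 0 \<le> f k"
  shows "f k \<le> s"
  using sum_le_suminf[of f "{k}"] assms by (auto simp: sums_iff)

lemma sums_xlnx_nonpos:
  fixes p :: "nat \<Rightarrow> real"
  assumes "(\<lambda>k. p k * ln (p k)) sums s" and "\<And>k. 0 \<le> p k" and "\<And>k. p k \<le> 1"
  shows "s \<le> 0"
proof (rule sums_le[OF _ assms(1) sums_zero])
  show "p k * ln (p k) \<le> 0" for k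
    using assms(2,3)[of k] by (cases "p k = 0") (auto intro: mult_nonneg_nonpos)
qed

definition power_series :: "(nat \<Rightarrow> real) \<Rightarrow> real \<Rightarrow> real" where
  "power_series c z = (\<Sum>k. c k * z ^ k)"

lemma power_series_0 [simp]: "power_series c 0 = c 0"
  by (simp add: power_series_def powser_zero)

lemma power_series_has_derivative:
  fixes c :: "nat \<Rightarrow> real"
  assumes "\<And>z. \<bar>z\<bar> < K \<Longrightarrow> summable (\<lambda>k. c k * z ^ k)" and "\<bar>z\<bar> < K"
  shows "(power_series c has_real_derivative power_series (diffs c) z) (at z)"
  unfolding power_series_def[abs_def] using assms by (intro termdiffs_strong') auto

lemma summable_diffs_power_series:
  fixes c :: "nat \<Rightarrow> real"
  assumes "\<And>z. \<bar>z\<bar> < K \<Longrightarrow> summable (\<lambda>k. c k * z ^ k)" and "\<bar>z\<bar> < K"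
  shows "summable (\<lambda>k. diffs c k * z ^ k)"
  using assms by (intro termdiff_converges[of z K]) auto

lemma sums_shift_coeffs:
  fixes h :: "nat \<Rightarrow> real"
  assumes "summable (\<lambda>k. h k * z ^ k)"
  shows "(\<lambda>k. (case k of 0 \<Rightarrow> 0 | Suc j \<Rightarrow> h j) * z ^ k) sums (z * power_series h z)"
proof -
  have "(\<lambda>k. z * (h k * z ^ k)) sums (z * power_series h z)"
    unfolding power_series_def using assms by (intro sums_mult summable_sums)
  then show ?thesis
    using sums_Suc_iff[of "\<lambda>k. (case k of 0 \<Rightarrow> 0 | Suc j \<Rightarrow> h j) * z ^ k"]
    by (simp add: mult_ac)
qed

lemma power_series_times_z_sums:
  fixes g :: "nat \<Rightarrow> real"
  assumes g': "summable (\<lambda>k. diffs g k * z ^ k)" and g'': "summable (\<lambda>k. diffs (diffs g) k * z ^ k)"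
  shows "(\<lambda>k. real k * g k * z ^ k) sums (z * power_series (diffs g) z)"
    and "(\<lambda>k. real k * (real k + 1) * g (Suc k) * z ^ k) sums (z * power_series (diffs (diffs g)) z)"
    and "(\<lambda>k. (real k - 1) * real k * g k * z ^ k) sums (z * (z * power_series (diffs (diffs g)) z))"
proof -
  have "(\<lambda>k. (case k of 0 \<Rightarrow> 0 | Suc j \<Rightarrow> diffs g j) * z ^ k) = (\<lambda>k. real k * g k * z ^ k)"
    by (auto simp: diffs_def split: nat.split)
  with sums_shift_coeffs[OF g'] show "(\<lambda>k. real k * g k * z ^ k) sums (z * power_series (diffs g) z)"
    by (simp add: power_series_def)
  have "(\<lambda>k. (case k of 0 \<Rightarrow> 0 | Suc j \<Rightarrow> diffs (diffs g) j) * z ^ k)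
      = (\<lambda>k. real k * (real k + 1) * g (Suc k) * z ^ k)"
    by (auto simp: diffs_def algebra_simps split: nat.split)
  with sums_shift_coeffs[OF g'']
  show zg'': "(\<lambda>k. real k * (real k + 1) * g (Suc k) * z ^ k) sums (z * power_series (diffs (diffs g)) z)"
    by (simp add: power_series_def)
  have "(\<lambda>k. (case k of 0 \<Rightarrow> 0 | Suc j \<Rightarrow> real j * (real j + 1) * g (Suc j)) * z ^ k)
      = (\<lambda>k. (real k - 1) * real k * g k * z ^ k)"
    by (auto simp: algebra_simps split: nat.split)
  with sums_shift_coeffs[OF sums_summable[OF zg'']] zg''
  show "(\<lambda>k. (real k - 1) * real k * g k * z ^ k) sums (z * (z * power_series (diffs (diffs g)) z))"
    by (simp add: sums_iff power_series_def)
qed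

lemma power_series_second_order_sums:
  fixes g :: "nat \<Rightarrow> real"
  assumes g: "summable (\<lambda>k. g k * z ^ k)" and g': "summable (\<lambda>k. diffs g k * z ^ k)"
    and g'': "summable (\<lambda>k. diffs (diffs g) k * z ^ k)"
  shows "(\<lambda>k. ((a + real k) * (a + real k + 1) * g k - 2 * (real k + 1) * (a + real k + 1) * g (Suc k)
                + (real k + 1) * (real k + 2) * g (Suc (Suc k))) * z ^ k)
    sums (a * (a + 1) * power_series g z - 2 * (a + 1) * (1 - z) * power_series (diffs g) z
          + (1 - z)\<^sup>2 * power_series (diffs (diffs g)) z)"
proof -
  define G G' G'' where "G = power_series g z" and "G' = power_series (diffs g) z"
    and "G'' = power_series (diffs (diffs g)) z"
  note shifted = power_series_times_z_sums[OF g' g'', folded G'_def G''_def]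
  have "(\<lambda>k. a * (a + 1) * (g k * z ^ k) - 2 * (a + 1) * (diffs g k * z ^ k)
           + 2 * (a + 1) * (real k * g k * z ^ k) + diffs (diffs g) k * z ^ k
           - 2 * (real k * (real k + 1) * g (Suc k) * z ^ k) + (real k - 1) * real k * g k * z ^ k)
        sums (a * (a + 1) * G - 2 * (a + 1) * G' + 2 * (a + 1) * (z * G') + G'' - 2 * (z * G'')
              + z * (z * G''))"
    using shifted unfolding G_def G'_def G''_def power_series_def
    by (intro sums_add sums_diff sums_mult summable_sums g g' g'')
  moreover have "a * (a + 1) * G - 2 * (a + 1) * G' + 2 * (a + 1) * (z * G') + G'' - 2 * (z * G'')
              + z * (z * G'') = a * (a + 1) * G - 2 * (a + 1) * (1 - z) * G' + (1 - z)\<^sup>2 * G''"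
    by (simp add: power2_eq_square algebra_simps)
  ultimately show ?thesis
    by (simp add: G_def G'_def G''_def diffs_def algebra_simps)
qed

lemma DERIV_one_plus_powr:
  "t > - 1 \<Longrightarrow> ((\<lambda>s. (1 + s) powr b) has_real_derivative b * (1 + t) powr b * inverse (1 + t)) (at t)"
  by (auto intro!: derivative_eq_intros simp: powr_diff divide_inverse)

lemma DERIV_inverse_one_plus:
  "t > - 1 \<Longrightarrow> ((\<lambda>s. inverse (1 + s)) has_real_derivative - (inverse (1 + t) ^ 2)) (at t)"
  by (auto intro!: derivative_eq_intros simp: power2_eq_square)

lemma DERIV_compose_ratio:
  assumes "t > - 1" and "(F has_real_derivative D) (at (t / (1 + t)))"
  shows "((\<lambda>s. F (s / (1 + s))) has_real_derivative D * inverse (1 + t) ^ 2) (at t)"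
proof -
  have "((\<lambda>s. s / (1 + s)) has_real_derivative inverse (1 + t) ^ 2) (at t)"
    using assms(1) by (auto intro!: derivative_eq_intros simp: divide_simps power2_eq_square)
  from DERIV_chain'[OF this assms(2)] show ?thesis by (simp add: mult.commute)
qed

lemma ln_fact_le_two_power: "ln (fact k :: real) \<le> 2 ^ k"
proof (induction k)
  case (Suc k)
  have "ln (fact (Suc k) :: real) = ln (real k + 1) + ln (fact k)"
    by (simp add: ln_mult add.commute)
  also have "\<dots> \<le> real k + 2 ^ k"
    using ln_le_minus_one[of "real k + 1"] Suc by simp
  also have "\<dots> \<le> 2 ^ Suc k"
    using less_exp[of k] by simp
  finally show ?case .
qed simp

definition log_fact_coeff :: "nat \<Rightarrow> real" where
  "log_fact_coeff k = ln (fact k) / fact k"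

lemma summable_log_fact_series: "summable (\<lambda>k. log_fact_coeff k * z ^ k)"
proof (rule summable_comparison_test)
  show "summable (\<lambda>k. inverse (fact k) * (2 * \<bar>z\<bar>) ^ k)" by (rule summable_exp)
  have "norm (log_fact_coeff k * z ^ k) \<le> inverse (fact k) * (2 * \<bar>z\<bar>) ^ k" for k
  proof -
    have "norm (log_fact_coeff k * z ^ k) = ln (fact k) / fact k * \<bar>z\<bar> ^ k"
      by (simp add: log_fact_coeff_def abs_mult power_abs)
    also have "\<dots> \<le> 2 ^ k / fact k * \<bar>z\<bar> ^ k"
      using ln_fact_le_two_power[of k] by (intro mult_right_mono divide_right_mono) auto
    finally show ?thesis by (simp add: power_mult_distrib field_simps)
  qed
  then show "\<exists>N. \<forall>k\<ge>N. norm (log_fact_coeff k * z ^ k) \<le> inverse (fact k) * (2 * \<bar>z\<bar>) ^ k"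
    by blast
qed

lemma summable_log_fact_series_diffs:
  "summable (\<lambda>k. diffs log_fact_coeff k * z ^ k)"
  "summable (\<lambda>k. diffs (diffs log_fact_coeff) k * z ^ k)"
  by (intro termdiff_converges_all summable_log_fact_series)+

lemma log_fact_coeff_second_difference:
  "log_fact_coeff k - 2 * diffs log_fact_coeff k + diffs (diffs log_fact_coeff) k
     = (ln (real k + 2) - ln (real k + 1)) / fact k"
proof -
  have "diffs log_fact_coeff k = ln (fact (Suc k)) / fact k"
    by (simp only: diffs_def log_fact_coeff_def Suc_times_div_fact)
  moreover have "diffs (diffs log_fact_coeff) k = ln (fact (Suc (Suc k))) / fact k"
    by (simp only: diffs_def log_fact_coeff_def Suc_times_div_fact)
  moreover have "ln (fact (Suc k) :: real) = ln (real k + 1) + ln (fact k)"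
    by (simp add: ln_mult add.commute)
  moreover have "ln (fact (Suc (Suc k)) :: real) = ln (real k + 2) + ln (fact (Suc k))"
    by (subst fact_Suc) (simp add: ln_mult add.commute del: fact_Suc)
  ultimately show ?thesis by (simp add: log_fact_coeff_def field_simps)
qed

lemma log_fact_series_second_difference_le:
  assumes "l > 0"
  shows "l * (power_series log_fact_coeff l - 2 * power_series (diffs log_fact_coeff) l
            + power_series (diffs (diffs log_fact_coeff)) l) \<le> exp l - 1"
proof -
  define d where "d k = log_fact_coeff k - 2 * diffs log_fact_coeff k + diffs (diffs log_fact_coeff) k" for k
  have "(\<lambda>k. log_fact_coeff k * l ^ k - 2 * (diffs log_fact_coeff k * l ^ k)
           + diffs (diffs log_fact_coeff) k * l ^ k)
        sums (power_series log_fact_coeff l - 2 * power_series (diffs log_fact_coeff) l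
              + power_series (diffs (diffs log_fact_coeff)) l)"
    unfolding power_series_def
    by (intro sums_add sums_diff sums_mult summable_sums summable_log_fact_series
        summable_log_fact_series_diffs)
  then have "(\<lambda>k. d k * l ^ k) sums (power_series log_fact_coeff l
      - 2 * power_series (diffs log_fact_coeff) l + power_series (diffs (diffs log_fact_coeff)) l)"
    by (simp add: d_def algebra_simps)
  from sums_mult[OF this, of l] have "(\<lambda>k. d k * l ^ Suc k) sums (l * (power_series log_fact_coeff l
      - 2 * power_series (diffs log_fact_coeff) l + power_series (diffs (diffs log_fact_coeff)) l))"
    by (simp add: mult_ac)
  moreover have "(\<lambda>k. l ^ Suc k / fact (Suc k)) sums (exp l - 1)"
    using exp_series_sums[of l] sums_Suc_iff[of "\<lambda>k. l ^ k / fact k"] by simp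
  moreover have "d k * l ^ Suc k \<le> l ^ Suc k / fact (Suc k)" for k
  proof -
    have "ln (real k + 2) - ln (real k + 1) \<le> 1 / (real k + 1)"
      using ln_diff_bounds(2)[of "real k + 1" "real k + 2"] by simp
    then have "d k \<le> 1 / (real k + 1) / fact k"
      unfolding d_def log_fact_coeff_second_difference by (rule divide_right_mono) simp
    also have "\<dots> = 1 / fact (Suc k)" by simp
    finally show ?thesis
      using \<open>l > 0\<close> by (simp add: mult_right_mono divide_inverse)
  qed
  ultimately show ?thesis by (rule sums_le[rotated])
qed

definition poisson_entropy :: "real \<Rightarrow> real" where
  "poisson_entropy l = l - l * ln l + exp (- l) * power_series log_fact_coeff l"

lemma poisson_entropy_0 [simp]: "poisson_entropy 0 = 0"
  by (simp add: poisson_entropy_def log_fact_coeff_def)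

lemma concave_on_poisson_entropy: "concave_on {0<..} poisson_entropy"
proof -
  define S S' S'' where "S = power_series log_fact_coeff"
    and "S' = power_series (diffs log_fact_coeff)" and "S'' = power_series (diffs (diffs log_fact_coeff))"
  have S: "(S has_real_derivative S' l) (at l)" and S': "(S' has_real_derivative S'' l) (at l)" for l
    unfolding S_def S'_def S''_def
    by (auto intro!: power_series_has_derivative[where K = "\<bar>l\<bar> + 1"] summable_log_fact_series
        summable_log_fact_series_diffs)
  show ?thesis
  proof (rule f''_le0_imp_concave)
    fix l :: real assume "l \<in> {0<..}"
    then have l: "l > 0" by simp
    show "(poisson_entropy has_real_derivative - ln l + exp (- l) * (S' l - S l)) (at l)"
      unfolding poisson_entropy_def[abs_def] S_def[symmetric] using l
      by (auto intro!: derivative_eq_intros S simp: algebra_simps)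
    show "((\<lambda>l. - ln l + exp (- l) * (S' l - S l)) has_real_derivative
            - 1 / l + exp (- l) * (S l - 2 * S' l + S'' l)) (at l)"
      using l by (auto intro!: derivative_eq_intros S S' simp: algebra_simps)
    have "exp (- l) * (S l - 2 * S' l + S'' l) \<le> 1 / l"
      using log_fact_series_second_difference_le[OF l] l
      by (simp add: S_def S'_def S''_def exp_minus field_simps)
    then show "- 1 / l + exp (- l) * (S l - 2 * S' l + S'' l) \<le> 0" by simp
  qed simp
qed

lemma poisson_entropy_sums:
  assumes "l \<ge> 0"
  shows "(\<lambda>k. l ^ k / fact k * exp (- l) * ln (l ^ k / fact k * exp (- l))) sums (- poisson_entropy l)"
proof (cases "l = 0")
  case True
  then have "(\<lambda>k. l ^ k / fact k * exp (- l) * ln (l ^ k / fact k * exp (- l))) = (\<lambda>k. 0)"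
    by (auto simp: power_0_left)
  then show ?thesis using True by simp
next
  case False
  with assms have l: "l > 0" by simp
  have xlnx: "l ^ k / fact k * exp (- l) * ln (l ^ k / fact k * exp (- l))
      = exp (- l) * (ln l * (real k * (l ^ k / fact k)) - log_fact_coeff k * l ^ k - l * (l ^ k / fact k))"
    for k
  proof -
    have ln_weight: "ln (l ^ k / fact k * exp (- l)) = real k * ln l - ln (fact k) - l"
      using l by (simp add: ln_mult_pos ln_divide_pos ln_realpow)
    show ?thesis unfolding ln_weight by (simp add: log_fact_coeff_def field_simps)
  qed
  have "(\<lambda>k. real (Suc k) * (l ^ Suc k / fact (Suc k))) sums (l * exp l)"
    using sums_mult[OF exp_series_sums, of l] by (simp add: Suc_times_div_fact del: of_nat_Suc)
  then have "(\<lambda>k. real k * (l ^ k / fact k)) sums (l * exp l)"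
    using sums_Suc_iff[of "\<lambda>k. real k * (l ^ k / fact k)"] by simp
  then have "(\<lambda>k. exp (- l) * (ln l * (real k * (l ^ k / fact k)) - log_fact_coeff k * l ^ k - l * (l ^ k / fact k)))
      sums (exp (- l) * (ln l * (l * exp l) - power_series log_fact_coeff l - l * exp l))"
    unfolding power_series_def
    by (intro sums_mult sums_diff exp_series_sums summable_sums summable_log_fact_series)
  moreover have "exp (- l) * (ln l * (l * exp l) - power_series log_fact_coeff l - l * exp l) = - poisson_entropy l"
    by (simp add: poisson_entropy_def exp_minus field_simps)
  ultimately show ?thesis by (simp only: xlnx)
qed

lemma poisson_entropy_nonneg:
  assumes "l \<ge> 0"
  shows "poisson_entropy l \<ge> 0"
proof -
  have "l ^ k / fact k \<le> exp l" for k
    using assms by (intro sums_nonneg_term_le[OF exp_series_sums]) simp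
  then have "l ^ k / fact k * exp (- l) \<le> exp l * exp (- l)" for k
    by (rule mult_right_mono) simp
  then have "l ^ k / fact k * exp (- l) \<le> 1" for k
    by (simp add: exp_minus)
  then have "- poisson_entropy l \<le> 0"
    using sums_xlnx_nonpos[OF poisson_entropy_sums[OF assms]] assms by simp
  then show ?thesis by simp
qed

definition negbin_coeff :: "real \<Rightarrow> nat \<Rightarrow> real" where
  "negbin_coeff a k = pochhammer a k / fact k"

lemma negbin_coeff_0 [simp]: "negbin_coeff a 0 = 1"
  by (simp add: negbin_coeff_def)

lemma negbin_coeff_Suc: "negbin_coeff a (Suc k) = negbin_coeff a k * (a + real k) / (real k + 1)"
  by (simp add: negbin_coeff_def pochhammer_Suc field_simps)

lemma negbin_coeff_pos: "a > 0 \<Longrightarrow> negbin_coeff a k > 0"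
  by (simp add: negbin_coeff_def pochhammer_pos)

lemma Suc_times_negbin_coeff_Suc: "real (Suc k) * negbin_coeff a (Suc k) = a * negbin_coeff (a + 1) k"
  by (simp add: negbin_coeff_def pochhammer_rec Suc_times_div_fact del: of_nat_Suc)

lemma negbin_coeff_eq_gbinomial: "negbin_coeff a k = (-1) ^ k * ((- a) gchoose k)"
proof -
  have "(-1) ^ k * ((- a) gchoose k) = ((-1) ^ k * (-1) ^ k) * pochhammer a k / fact k"
    by (simp add: gbinomial_pochhammer)
  also have "(-1 :: real) ^ k * (-1) ^ k = 1" by (simp flip: power_add)
  finally show ?thesis by (simp add: negbin_coeff_def)
qed

lemma negbin_coeff_bounds:
  assumes "a \<ge> 1"
  shows "1 \<le> negbin_coeff a k \<and> negbin_coeff a k \<le> a ^ k"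
proof (induction k)
  case (Suc k)
  have "real k \<le> a * real k"
    using assms mult_right_mono[of 1 a "real k"] by simp
  then have "1 \<le> (a + real k) / (real k + 1)" and "(a + real k) / (real k + 1) \<le> a"
    using assms by (auto simp: field_simps)
  with Suc have "1 * 1 \<le> negbin_coeff a k * ((a + real k) / (real k + 1))"
    and "negbin_coeff a k * ((a + real k) / (real k + 1)) \<le> a ^ k * a"
    by (intro mult_mono; simp)+
  then show ?case by (simp add: negbin_coeff_Suc mult.commute)
qed simp

lemma negbin_series_sums:
  assumes "\<bar>u\<bar> < 1"
  shows "(\<lambda>k. negbin_coeff a k * u ^ k) sums (1 - u) powr (- a)"
proof -
  have "(\<lambda>k. ((- a) gchoose k) * (- u) ^ k) sums (1 + - u) powr (- a)"
    using assms by (intro gen_binomial_real) simp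
  moreover have "((- a) gchoose k) * (- u) ^ k = negbin_coeff a k * u ^ k" for k
    by (simp only: negbin_coeff_eq_gbinomial power_minus[of u k] mult_ac)
  ultimately show ?thesis by simp
qed

lemma negbin_series_times_k_sums:
  assumes "\<bar>u\<bar> < 1"
  shows "(\<lambda>k. real k * negbin_coeff a k * u ^ k) sums (a * u * (1 - u) powr (- a - 1))"
proof -
  have "(\<lambda>k. (a * u) * (negbin_coeff (a + 1) k * u ^ k)) sums ((a * u) * (1 - u) powr (- (a + 1)))"
    using negbin_series_sums[OF assms] by (rule sums_mult)
  then have "(\<lambda>k. real (Suc k) * negbin_coeff a (Suc k) * u ^ Suc k) sums (a * u * (1 - u) powr (- a - 1))"
    by (simp only: Suc_times_negbin_coeff_Suc power_Suc mult_ac minus_add_distrib diff_conv_add_uminus)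
  then show ?thesis
    using sums_Suc_iff[of "\<lambda>k. real k * negbin_coeff a k * u ^ k"] by simp
qed

definition negbin_log_coeff :: "real \<Rightarrow> nat \<Rightarrow> real" where
  "negbin_log_coeff a k = negbin_coeff a k * ln (negbin_coeff a k)"

lemma summable_negbin_log_series:
  assumes "a \<ge> 1" and "\<bar>z\<bar> < 1"
  shows "summable (\<lambda>k. negbin_log_coeff a k * z ^ k)"
proof (rule summable_comparison_test)
  show "summable (\<lambda>k. ln a * (real k * negbin_coeff a k * \<bar>z\<bar> ^ k))"
    using negbin_series_times_k_sums[of "\<bar>z\<bar>" a] assms
    by (intro summable_mult sums_summable) auto
  have "norm (negbin_log_coeff a k * z ^ k) \<le> ln a * (real k * negbin_coeff a k * \<bar>z\<bar> ^ k)" for k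
  proof -
    have C: "1 \<le> negbin_coeff a k" "negbin_coeff a k \<le> a ^ k"
      using negbin_coeff_bounds[OF assms(1)] by auto
    then have "0 \<le> ln (negbin_coeff a k)" and "ln (negbin_coeff a k) \<le> ln (a ^ k)"
      by auto
    then have "0 \<le> ln (negbin_coeff a k)" and "ln (negbin_coeff a k) \<le> real k * ln a"
      using assms(1) by (auto simp: ln_realpow)
    then have "negbin_coeff a k * ln (negbin_coeff a k) * \<bar>z\<bar> ^ k
        \<le> negbin_coeff a k * (real k * ln a) * \<bar>z\<bar> ^ k"
      using C by (intro mult_left_mono mult_right_mono) auto
    then show ?thesis
      using C \<open>0 \<le> ln (negbin_coeff a k)\<close>
      by (simp add: negbin_log_coeff_def abs_mult power_abs mult_ac)
  qed
  then show "\<exists>N. \<forall>k\<ge>N. norm (negbin_log_coeff a k * z ^ k)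
      \<le> ln a * (real k * negbin_coeff a k * \<bar>z\<bar> ^ k)"
    by blast
qed

lemma summable_negbin_log_series_diffs:
  assumes "a \<ge> 1" and "\<bar>z\<bar> < 1"
  shows "summable (\<lambda>k. diffs (negbin_log_coeff a) k * z ^ k)"
    and "summable (\<lambda>k. diffs (diffs (negbin_log_coeff a)) k * z ^ k)"
proof -
  have s: "summable (\<lambda>k. diffs (negbin_log_coeff a) k * z ^ k)" if "\<bar>z\<bar> < 1" for z
    using summable_negbin_log_series[OF assms(1)] that by (rule summable_diffs_power_series)
  show "summable (\<lambda>k. diffs (negbin_log_coeff a) k * z ^ k)"
    using s assms(2) .
  show "summable (\<lambda>k. diffs (diffs (negbin_log_coeff a)) k * z ^ k)"
    using s assms(2) by (rule summable_diffs_power_series)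
qed

lemma negbin_log_series_has_derivative:
  assumes "a \<ge> 1" and "\<bar>z\<bar> < 1"
  shows "(power_series (negbin_log_coeff a) has_real_derivative
            power_series (diffs (negbin_log_coeff a)) z) (at z)"
    and "(power_series (diffs (negbin_log_coeff a)) has_real_derivative
            power_series (diffs (diffs (negbin_log_coeff a))) z) (at z)"
  using assms by (auto intro!: power_series_has_derivative[where K = 1] summable_negbin_log_series
      summable_negbin_log_series_diffs)

definition negbin_kernel_coeff :: "real \<Rightarrow> nat \<Rightarrow> real" where
  "negbin_kernel_coeff a k = (a + real k) * (a + real k + 1) * negbin_log_coeff a k
     - 2 * (real k + 1) * (a + real k + 1) * negbin_log_coeff a (Suc k)
     + (real k + 1) * (real k + 2) * negbin_log_coeff a (Suc (Suc k))"

lemma negbin_kernel_coeff_eq: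
  "negbin_kernel_coeff a k = (a + real k) * (a + real k + 1) * negbin_coeff a k *
     (ln (negbin_coeff a (Suc (Suc k))) - 2 * ln (negbin_coeff a (Suc k)) + ln (negbin_coeff a k))"
proof -
  define C0 C1 C2 where "C0 = negbin_coeff a k" and "C1 = negbin_coeff a (Suc k)"
    and "C2 = negbin_coeff a (Suc (Suc k))"
  define L0 L1 L2 where "L0 = ln C0" and "L1 = ln C1" and "L2 = ln C2"
  have C1: "(real k + 1) * C1 = (a + real k) * C0"
    by (simp add: C0_def C1_def negbin_coeff_Suc)
  have "(real k + 2) * C2 = (a + real k + 1) * C1"
    by (simp add: C1_def C2_def negbin_coeff_Suc[of a "Suc k"] add_ac)
  then have C2: "(real k + 1) * (real k + 2) * C2 = (a + real k) * (a + real k + 1) * C0"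
    by (metis C1 mult.assoc mult.left_commute)
  have "negbin_kernel_coeff a k = (a + real k) * (a + real k + 1) * C0 * L0
      - 2 * (a + real k + 1) * ((real k + 1) * C1) * L1 + ((real k + 1) * (real k + 2) * C2) * L2"
    by (simp add: negbin_kernel_coeff_def negbin_log_coeff_def C0_def C1_def C2_def L0_def L1_def L2_def
        algebra_simps)
  also have "\<dots> = (a + real k) * (a + real k + 1) * C0 * (L2 - 2 * L1 + L0)"
    unfolding C1 C2 by (simp add: algebra_simps)
  finally show ?thesis by (simp add: C0_def C1_def C2_def L0_def L1_def L2_def)
qed

lemma negbin_kernel_coeff_ge:
  assumes "a \<ge> 1"
  shows "negbin_kernel_coeff a k \<ge> - a * negbin_coeff a (Suc k)"
proof -
  define C where "C = negbin_coeff a k"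
  have pos: "C > 0" "negbin_coeff a (Suc k) > 0" "a + real k > 0"
    using assms negbin_coeff_pos[of a] by (auto simp: C_def)
  have C1: "negbin_coeff a (Suc k) = C * ((a + real k) / (real k + 1))"
    by (simp add: negbin_coeff_Suc C_def)
  have C2: "negbin_coeff a (Suc (Suc k)) = negbin_coeff a (Suc k) * ((a + real k + 1) / (real k + 2))"
    by (simp add: negbin_coeff_Suc[of a "Suc k"] add_ac)
  define D where "D = ln (negbin_coeff a (Suc (Suc k))) - 2 * ln (negbin_coeff a (Suc k)) + ln C"
  have "D = (ln (a + real k + 1) - ln (a + real k)) - (ln (real k + 2) - ln (real k + 1))"
    unfolding D_def C2 using pos by (simp add: C1 ln_mult_pos ln_divide_pos add_pos_pos)
  also have "\<dots> \<ge> 1 / (a + real k + 1) - 1 / (real k + 1)"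
    using ln_diff_bounds(1)[of "a + real k" "a + real k + 1"] ln_diff_bounds(2)[of "real k + 1" "real k + 2"] pos
    by simp
  finally have "(a + real k + 1) * D \<ge> (a + real k + 1) * (1 / (a + real k + 1) - 1 / (real k + 1))"
    using pos by (intro mult_left_mono) auto
  also have "(a + real k + 1) * (1 / (a + real k + 1) - 1 / (real k + 1)) = - a / (real k + 1)"
  proof -
    have "a + real k + 1 \<noteq> 0" "real k + 1 \<noteq> 0" using pos by linarith+
    then show ?thesis by (simp add: right_diff_distrib) (simp add: field_simps)
  qed
  finally have "((a + real k) * C) * ((a + real k + 1) * D) \<ge> ((a + real k) * C) * (- a / (real k + 1))"
    using pos by (intro mult_left_mono) auto
  moreover have "negbin_kernel_coeff a k = ((a + real k) * C) * ((a + real k + 1) * D)"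
    unfolding negbin_kernel_coeff_eq D_def C_def by (simp add: mult_ac)
  moreover have "((a + real k) * C) * (- a / (real k + 1)) = - a * negbin_coeff a (Suc k)"
    unfolding C1 by (simp add: field_simps)
  ultimately show ?thesis by simp
qed

text \<open>With \<open>u = t / (1 + t)\<close>, \<open>(1 + t) powr (- a) / (1 + t)\<^sup>2 * negbin_kernel a u\<close> is the second
  derivative of \<open>(1 + t) powr (- a) * power_series (negbin_log_coeff a) u\<close>.\<close>

definition negbin_kernel :: "real \<Rightarrow> real \<Rightarrow> real" where
  "negbin_kernel a z = a * (a + 1) * power_series (negbin_log_coeff a) z
     - 2 * (a + 1) * (1 - z) * power_series (diffs (negbin_log_coeff a)) z
     + (1 - z)\<^sup>2 * power_series (diffs (diffs (negbin_log_coeff a))) z"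

lemma negbin_kernel_sums:
  assumes "a \<ge> 1" and "\<bar>z\<bar> < 1"
  shows "(\<lambda>k. negbin_kernel_coeff a k * z ^ k) sums negbin_kernel a z"
  using power_series_second_order_sums[OF summable_negbin_log_series[OF assms]
      summable_negbin_log_series_diffs[OF assms]]
  by (simp add: negbin_kernel_def negbin_kernel_coeff_def)

lemma negbin_kernel_lower_bound:
  assumes "a \<ge> 1" and u: "0 \<le> u" "u < 1"
  shows "- a * (1 - u) powr (- a) \<le> u * negbin_kernel a u"
proof -
  have "\<bar>u\<bar> < 1" using u by simp
  have "(\<lambda>k. negbin_coeff a (Suc k) * u ^ Suc k) sums ((1 - u) powr (- a) - 1)"
    using negbin_series_sums[OF \<open>\<bar>u\<bar> < 1\<close>] sums_Suc_iff[of "\<lambda>k. negbin_coeff a k * u ^ k"]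
    by simp
  then have "(\<lambda>k. - a * (negbin_coeff a (Suc k) * u ^ Suc k)) sums (- a * ((1 - u) powr (- a) - 1))"
    by (rule sums_mult)
  moreover have "(\<lambda>k. negbin_kernel_coeff a k * u ^ Suc k) sums (u * negbin_kernel a u)"
    using sums_mult[OF negbin_kernel_sums[OF assms(1) \<open>\<bar>u\<bar> < 1\<close>], of u] by (simp add: mult_ac)
  moreover have "- a * (negbin_coeff a (Suc k) * u ^ Suc k) \<le> negbin_kernel_coeff a k * u ^ Suc k" for k
    using mult_right_mono[OF negbin_kernel_coeff_ge[OF assms(1)], of "u ^ Suc k" k] u by (simp add: mult_ac)
  ultimately have "- a * ((1 - u) powr (- a) - 1) \<le> u * negbin_kernel a u"
    by (rule sums_le[rotated])
  then show ?thesis using assms(1) by (simp add: algebra_simps)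
qed

definition negbin_entropy :: "real \<Rightarrow> real \<Rightarrow> real" where
  "negbin_entropy a t = a * (1 + t) * ln (1 + t) - a * t * ln t
     - (1 + t) powr (- a) * power_series (negbin_log_coeff a) (t / (1 + t))"

lemma negbin_entropy_0 [simp]: "negbin_entropy a 0 = 0"
  by (simp add: negbin_entropy_def negbin_log_coeff_def)

definition negbin_entropy_deriv :: "real \<Rightarrow> real \<Rightarrow> real" where
  "negbin_entropy_deriv a t = a * ln (1 + t) - a * ln t
     - (1 + t) powr (- a) * inverse (1 + t) *
       (power_series (diffs (negbin_log_coeff a)) (t / (1 + t)) * inverse (1 + t)
        - a * power_series (negbin_log_coeff a) (t / (1 + t)))"

lemma negbin_entropy_has_derivative:
  assumes "a \<ge> 1" and "t > 0"
  shows "(negbin_entropy a has_real_derivative negbin_entropy_deriv a t) (at t)"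
proof -
  have "t > - 1" and u: "\<bar>t / (1 + t)\<bar> < 1" using \<open>t > 0\<close> by simp_all
  have L: "((\<lambda>s. a * (1 + s) * ln (1 + s) - a * s * ln s) has_real_derivative a * ln (1 + t) - a * ln t) (at t)"
    using \<open>t > 0\<close> by (auto intro!: derivative_eq_intros simp: divide_simps)
  have P: "((\<lambda>s. (1 + s) powr (- a)) has_real_derivative - a * (1 + t) powr (- a) * inverse (1 + t)) (at t)"
    using \<open>t > 0\<close> DERIV_one_plus_powr[of t "- a"] by simp
  note G = DERIV_compose_ratio[OF \<open>t > - 1\<close> negbin_log_series_has_derivative(1)[OF assms(1) u]]
  show ?thesis
    unfolding negbin_entropy_def[abs_def] negbin_entropy_deriv_def
    by (rule DERIV_cong[OF DERIV_diff[OF L DERIV_mult'[OF P G]]]) (simp add: power2_eq_square algebra_simps)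
qed

lemma negbin_entropy_deriv_has_derivative:
  assumes "a \<ge> 1" and "t > 0"
  shows "(negbin_entropy_deriv a has_real_derivative
           a / (1 + t) - a / t - (1 + t) powr (- a) / (1 + t)\<^sup>2 * negbin_kernel a (t / (1 + t))) (at t)"
proof -
  define G G' G'' where "G = power_series (negbin_log_coeff a)"
    and "G' = power_series (diffs (negbin_log_coeff a))"
    and "G'' = power_series (diffs (diffs (negbin_log_coeff a)))"
  define u w where "u = t / (1 + t)" and "w = inverse (1 + t)"
  have "t > - 1" and u: "\<bar>t / (1 + t)\<bar> < 1" using \<open>t > 0\<close> by simp_all
  note G = DERIV_compose_ratio[OF \<open>t > - 1\<close> negbin_log_series_has_derivative(1)[OF assms(1) u]]
  note G' = DERIV_compose_ratio[OF \<open>t > - 1\<close> negbin_log_series_has_derivative(2)[OF assms(1) u]]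
  note W = DERIV_inverse_one_plus[OF \<open>t > - 1\<close>]
  have L: "((\<lambda>s. a * ln (1 + s) - a * ln s) has_real_derivative a / (1 + t) - a / t) (at t)"
    using \<open>t > 0\<close> by (auto intro!: derivative_eq_intros)
  have Q: "((\<lambda>s. (1 + s) powr (- a) * inverse (1 + s)) has_real_derivative
      (1 + t) powr (- a) * - (w ^ 2) + - a * (1 + t) powr (- a) * w * w) (at t)"
    using DERIV_mult'[OF DERIV_one_plus_powr[OF \<open>t > - 1\<close>, of "- a"] W] by (simp add: w_def)
  have H: "((\<lambda>s. G' (s / (1 + s)) * inverse (1 + s) - a * G (s / (1 + s))) has_real_derivative
      G' u * - (w ^ 2) + G'' u * w ^ 2 * w - a * (G' u * w ^ 2)) (at t)"
    using DERIV_diff[OF DERIV_mult'[OF G' W] DERIV_cmult[OF G, of a]]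
    by (simp add: G_def G'_def G''_def u_def w_def)
  have "1 - u = w" and "(1 + t) powr (- a) / (1 + t)\<^sup>2 = (1 + t) powr (- a) * w ^ 2"
    using \<open>t > 0\<close> by (simp_all add: u_def w_def field_simps)
  then have K: "(1 + t) powr (- a) / (1 + t)\<^sup>2 * negbin_kernel a (t / (1 + t))
      = (1 + t) powr (- a) * w ^ 2 * (a * (a + 1) * G u - 2 * (a + 1) * w * G' u + w ^ 2 * G'' u)"
    by (simp add: negbin_kernel_def G_def G'_def G''_def u_def[symmetric])
  have deriv: "negbin_entropy_deriv a = (\<lambda>s. a * ln (1 + s) - a * ln s
      - (1 + s) powr (- a) * inverse (1 + s) * (G' (s / (1 + s)) * inverse (1 + s) - a * G (s / (1 + s))))"
    by (simp add: fun_eq_iff negbin_entropy_deriv_def G_def G'_def)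
  show ?thesis
    unfolding K deriv by (rule DERIV_cong[OF DERIV_diff[OF L DERIV_mult'[OF Q H]]])
      (simp add: u_def[symmetric] w_def[symmetric] power2_eq_square algebra_simps)
qed

lemma negbin_entropy_second_derivative_nonpos:
  assumes "a \<ge> 1" and "t > 0"
  shows "a / (1 + t) - a / t - (1 + t) powr (- a) / (1 + t)\<^sup>2 * negbin_kernel a (t / (1 + t)) \<le> 0"
proof -
  define u w where "u = t / (1 + t)" and "w = 1 / (1 + t)"
  have w: "w > 0" "1 - u = w" "t * w = u" "w * (1 + t) = 1"
    using \<open>t > 0\<close> by (simp_all add: u_def w_def field_simps)
  have P: "(1 + t) powr (- a) * (1 - u) powr (- a) = 1"
    using \<open>t > 0\<close> by (simp add: w(2) w_def powr_divide powr_minus_divide)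
  have "0 \<le> u" "u < 1"
    using \<open>t > 0\<close> by (simp_all add: u_def)
  then have lower: "- a * (1 - u) powr (- a) \<le> u * negbin_kernel a u"
    by (rule negbin_kernel_lower_bound[OF assms(1)])
  have "- a * w = ((1 + t) powr (- a) * w) * (- a * (1 - u) powr (- a))"
    using P by (simp add: mult_ac)
  also have "\<dots> \<le> ((1 + t) powr (- a) * w) * (u * negbin_kernel a u)"
    using lower w by (intro mult_left_mono) auto
  also have "\<dots> = t * ((1 + t) powr (- a) * w\<^sup>2 * negbin_kernel a u)"
    unfolding w(3)[symmetric] by (simp add: power2_eq_square mult_ac)
  finally have "- a * w \<le> t * ((1 + t) powr (- a) * w\<^sup>2 * negbin_kernel a u)" .
  then have "t * (a * w - a / t - (1 + t) powr (- a) * w\<^sup>2 * negbin_kernel a u) \<le> a * (w * (1 + t)) - a"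
    using \<open>t > 0\<close> by (simp add: right_diff_distrib distrib_left mult_ac)
  then have "t * (a * w - a / t - (1 + t) powr (- a) * w\<^sup>2 * negbin_kernel a u) \<le> 0"
    using w(4) by simp
  then show ?thesis
    using \<open>t > 0\<close> by (simp add: u_def w_def mult_le_0_iff power_divide)
qed

lemma concave_on_negbin_entropy:
  assumes "a \<ge> 1"
  shows "concave_on {0<..} (negbin_entropy a)"
  using assms negbin_entropy_has_derivative negbin_entropy_deriv_has_derivative
    negbin_entropy_second_derivative_nonpos
  by (intro f''_le0_imp_concave) auto

lemma negbin_xlnx_sums:
  assumes "a \<ge> 1" and "0 < u" "u < 1" and "P > 0"
  shows "(\<lambda>k. negbin_coeff a k * u ^ k * P * ln (negbin_coeff a k * u ^ k * P))
    sums (P * power_series (negbin_log_coeff a) u + ln u * (P * (a * u * (1 - u) powr (- a - 1)))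
          + ln P * (P * (1 - u) powr (- a)))"
proof -
  have u: "\<bar>u\<bar> < 1" using assms by simp
  have "negbin_coeff a k * u ^ k * P * ln (negbin_coeff a k * u ^ k * P)
      = P * (negbin_log_coeff a k * u ^ k) + (ln u * P) * (real k * negbin_coeff a k * u ^ k)
        + (ln P * P) * (negbin_coeff a k * u ^ k)" for k
  proof -
    have "ln (negbin_coeff a k * u ^ k * P) = ln (negbin_coeff a k) + real k * ln u + ln P"
      using negbin_coeff_pos[of a k] assms by (simp add: ln_mult_pos ln_realpow)
    then show ?thesis by (simp add: negbin_log_coeff_def algebra_simps)
  qed
  moreover have "(\<lambda>k. P * (negbin_log_coeff a k * u ^ k) + (ln u * P) * (real k * negbin_coeff a k * u ^ k)
        + (ln P * P) * (negbin_coeff a k * u ^ k))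
      sums (P * power_series (negbin_log_coeff a) u + (ln u * P) * (a * u * (1 - u) powr (- a - 1))
        + (ln P * P) * (1 - u) powr (- a))"
    unfolding power_series_def
    by (intro sums_add sums_mult summable_sums summable_negbin_log_series[OF assms(1) u]
        negbin_series_times_k_sums[OF u] negbin_series_sums[OF u])
  ultimately show ?thesis by (simp add: mult_ac)
qed

lemma negbin_entropy_sums:
  assumes "a \<ge> 1" and "t \<ge> 0"
  shows "(\<lambda>k. negbin_coeff a k * (t / (1 + t)) ^ k * (1 + t) powr (- a)
           * ln (negbin_coeff a k * (t / (1 + t)) ^ k * (1 + t) powr (- a))) sums (- negbin_entropy a t)"
proof (cases "t = 0")
  case True
  then have "(\<lambda>k. negbin_coeff a k * (t / (1 + t)) ^ k * (1 + t) powr (- a)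
           * ln (negbin_coeff a k * (t / (1 + t)) ^ k * (1 + t) powr (- a))) = (\<lambda>k. 0)"
    by (auto simp: power_0_left)
  then show ?thesis using True by simp
next
  case False
  with \<open>t \<ge> 0\<close> have t: "t > 0" by simp
  define u P where "u = t / (1 + t)" and "P = (1 + t) powr (- a)"
  have u: "0 < u" "u < 1" "1 - u = 1 / (1 + t)" "ln u = ln t - ln (1 + t)"
    using t by (simp_all add: u_def field_simps ln_div)
  have P: "P > 0" "ln P = - a * ln (1 + t)"
    using t by (simp_all add: P_def ln_powr)
  have weight_sum: "P * (1 - u) powr (- a) = 1"
    using t by (simp add: P_def u(3) powr_divide powr_minus_divide flip: powr_add)
  have weight_mean: "P * (a * u * (1 - u) powr (- a - 1)) = a * t"
    using t by (simp add: P_def u(3) u_def powr_divide powr_minus_divide field_simps flip: powr_add)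
  have "(\<lambda>k. negbin_coeff a k * u ^ k * P * ln (negbin_coeff a k * u ^ k * P))
      sums (P * power_series (negbin_log_coeff a) u + ln u * (a * t) + ln P)"
    using negbin_xlnx_sums[OF assms(1) u(1,2) P(1)] unfolding weight_sum weight_mean by simp
  also have "P * power_series (negbin_log_coeff a) u + ln u * (a * t) + ln P = - negbin_entropy a t"
    by (simp add: negbin_entropy_def P(2) u(4) u_def[symmetric] P_def[symmetric] algebra_simps)
  finally show ?thesis by (simp only: u_def P_def)
qed

lemma negbin_entropy_nonneg:
  assumes a: "a \<ge> 1" and "t \<ge> 0"
  shows "negbin_entropy a t \<ge> 0"
proof -
  define u P where "u = t / (1 + t)" and "P = (1 + t) powr (- a)"
  have "1 + t > 0" using \<open>t \<ge> 0\<close> by simp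
  then have u: "0 \<le> u" "\<bar>u\<bar> < 1" "1 - u = 1 / (1 + t)"
    using \<open>t \<ge> 0\<close> by (simp_all add: u_def divide_simps)
  have P: "(1 - u) powr (- a) * P = 1"
    using \<open>1 + t > 0\<close> by (simp add: P_def u(3) powr_divide powr_minus_divide flip: powr_add)
  have nonneg: "0 \<le> negbin_coeff a k * u ^ k" for k
    using negbin_coeff_pos[of a k] a u by simp
  have "negbin_coeff a k * u ^ k * P \<le> (1 - u) powr (- a) * P" for k
    using sums_nonneg_term_le[OF negbin_series_sums[OF u(2)] nonneg]
    by (rule mult_right_mono) (simp add: P_def)
  then have "negbin_coeff a k * u ^ k * P \<le> 1" for k
    by (simp only: P)
  moreover have "0 \<le> negbin_coeff a k * u ^ k * P" for k
    using nonneg by (simp add: P_def)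
  ultimately have "- negbin_entropy a t \<le> 0"
    using sums_xlnx_nonpos[OF negbin_entropy_sums[OF assms, folded u_def P_def]] by blast
  then show ?thesis by simp
qed

lemma p_basis_poisson: "\<not> c > 0 \<Longrightarrow> p_basis c n k x = (n * x) ^ k / fact k * exp (- (n * x))"
  by (simp add: p_basis_def)

lemma p_basis_negbin:
  assumes "c > 0" and "x \<ge> 0"
  shows "p_basis c n k x = negbin_coeff (n / c) k * (c * x / (1 + c * x)) ^ k * (1 + c * x) powr (- (n / c))"
proof -
  have "1 + c * x > 0"
    using assms by (simp add: add_pos_nonneg)
  then have "(1 + c * x) powr (- (n / c) - real k) = (1 + c * x) powr (- (n / c)) / (1 + c * x) ^ k"
    by (simp add: powr_diff powr_realpow)
  moreover have "p_basis c n k x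
      = ((-1) ^ k * ((- (n / c)) gchoose k)) * ((c * x) ^ k * (1 + c * x) powr (- (n / c) - real k))"
    using assms unfolding p_basis_def by (simp only: if_True minus_divide_left mult.assoc)
  ultimately show ?thesis
    by (simp add: negbin_coeff_eq_gbinomial power_divide)
qed

lemma shannon_entropy_eqI:
  assumes "(\<lambda>k. p_basis c n k x * ln (p_basis c n k x)) sums (- H)"
  shows "shannon_entropy c n x = H"
  using assms by (simp add: shannon_entropy_def sums_iff)

theorem theorem2p1:
  fixes c n :: real
  assumes "c \<ge> 0" and "n > c"
  shows "concave_on {0..} (shannon_entropy c n) \<and> mono_on {0..} (shannon_entropy c n)"
proof (cases "c > 0")
  case True
  define a where "a = n / c"
  have a: "a \<ge> 1" using True assms by (simp add: a_def)
  have "shannon_entropy c n x = negbin_entropy a (c * x)" if "x \<ge> 0" for x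
    using negbin_entropy_sums[OF a, of "c * x"] True that
    by (intro shannon_entropy_eqI) (simp add: p_basis_negbin a_def)
  with concave_on_negbin_entropy[OF a] True negbin_entropy_nonneg[OF a] show ?thesis
    by (intro concave_mono_on_if_rescaled) auto
next
  case False
  with assms have "n > 0" by simp
  have "shannon_entropy c n x = poisson_entropy (n * x)" if "x \<ge> 0" for x
    using poisson_entropy_sums[of "n * x"] False that \<open>n > 0\<close>
    by (intro shannon_entropy_eqI) (simp add: p_basis_poisson)
  with concave_on_poisson_entropy \<open>n > 0\<close> poisson_entropy_nonneg show ?thesis
    by (intro concave_mono_on_if_rescaled) auto
qed

end
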